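(* With $n=2p+1$ agents and complete information, the Majority voting mechanism with Random confirmations (RC mechanism) subgame perfect implements the majority rule: for every preference profile $R$, every subgame-perfect equilibrium yields the outcome $Maj(R)$, and some subgame-perfect equilibrium yields $Maj(R)$.
   Context: Agents $I=\{1,\dots,n\}$, $n=2p+1$, options $A=\{a,b\}$, strict preferences over $A$, commonly known. Majority rule: $Maj(R)=a$ if at least $p+1$ agents prefer $a$, else $b$. Lotteries are compared by stochastic dominance: an agent preferring $x$ weakly (strictly) prefers $\beta$ to $\eta$ iff $\beta(x)\ge\eta(x)$ ($>$). RC mechanism: Voting stage: each agent simultaneously votes $v_i\in A$; the profile $v$ is publicly announced; the option with more votes is the Voting-stage winner. Confirmation stage: a set of $p+1$ agents is drawn uniformly at random and ordered uniformly, $\pi=(\pi_1,\dots,\pi_{p+1})$; sequentially, as long as nobody has announced $Y$, agent $\pi_t$ announces $Y$ or $N$. If some agent announces $Y$ the game ends and the outcome is the Voting-stage winner. If all $p+1$ announce $N$ the outcome is the lottery $\beta(v)$ with $\beta_a(v)=|\{i:v_i=a\}|/n$ and $\beta_b(v)=1-\beta_a(v)$. A subgame-perfect equilibrium is a strategy profile such that at every nonterminal history no agent can obtain a strictly SD-preferred outcome lottery by a unilateral deviation. *)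

theory Defs
  imports Complex_Main
begin

text \<open>Agents are 0,...,n-1 with n = 2p+1.  The two options a and b.\<close>
datatype opt = OA | OB

type_synonym lottery = "opt \<Rightarrow> real"

definition n_agents :: "nat \<Rightarrow> nat" where
  "n_agents p = 2 * p + 1"

definition pure :: "opt \<Rightarrow> lottery" where
  "pure x = (\<lambda>y. if y = x then 1 else 0)"

text \<open>Strict stochastic-dominance preference of agent i (whose preferred option is R i):
  beta is strictly preferred to eta iff beta(R i) > eta(R i).\<close>
definition sd_strict :: "(nat \<Rightarrow> opt) \<Rightarrow> nat \<Rightarrow> lottery \<Rightarrow> lottery \<Rightarrow> bool" where
  "sd_strict R i \<beta> \<eta> \<longleftrightarrow> \<beta> (R i) > \<eta> (R i)"

text \<open>Majority rule; R i is the option agent i prefers.\<close>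
definition Maj :: "nat \<Rightarrow> (nat \<Rightarrow> opt) \<Rightarrow> opt" where
  "Maj p R = (if card {i. i < n_agents p \<and> R i = OA} \<ge> p + 1 then OA else OB)"

text \<open>Vote profiles are lists of length n (entry i is agent i's vote).\<close>
definition vcount :: "opt \<Rightarrow> opt list \<Rightarrow> nat" where
  "vcount x v = card {i. i < length v \<and> v ! i = x}"

definition winner :: "opt list \<Rightarrow> opt" where
  "winner v = (if vcount OA v > vcount OB v then OA else OB)"

definition beta :: "opt list \<Rightarrow> lottery" where
  "beta v = (\<lambda>y. real (vcount y v) / real (length v))"

text \<open>Ordered committees: sequences of p+1 distinct agents; drawing a uniform (p+1)-subset
  and ordering it uniformly is the uniform distribution on this set.\<close>
definition Comms :: "nat \<Rightarrow> nat list set" where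
  "Comms p = {\<pi>. distinct \<pi> \<and> length \<pi> = p + 1 \<and> set \<pi> \<subseteq> {..<n_agents p}}"

text \<open>Confirmation-stage strategies: \<sigma> i v \<pi> t is the announcement (True = Y, False = N)
  of agent i at the history where votes v were cast, committee \<pi> was drawn, and
  positions 0..t-1 of \<pi> announced N (so it is relevant when \<pi> ! t = i).\<close>
type_synonym cstrat = "nat \<Rightarrow> opt list \<Rightarrow> nat list \<Rightarrow> nat \<Rightarrow> bool"

primrec conf_aux :: "cstrat \<Rightarrow> opt list \<Rightarrow> nat list \<Rightarrow> nat \<Rightarrow> nat \<Rightarrow> lottery" where
  "conf_aux \<sigma> v \<pi> t 0 = beta v"
| "conf_aux \<sigma> v \<pi> t (Suc m) =
     (if \<sigma> (\<pi> ! t) v \<pi> t then pure (winner v) else conf_aux \<sigma> v \<pi> (Suc t) m)"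

definition conf_out :: "cstrat \<Rightarrow> opt list \<Rightarrow> nat list \<Rightarrow> nat \<Rightarrow> lottery" where
  "conf_out \<sigma> v \<pi> t = conf_aux \<sigma> v \<pi> t (length \<pi> - t)"

definition chance_out :: "nat \<Rightarrow> cstrat \<Rightarrow> opt list \<Rightarrow> lottery" where
  "chance_out p \<sigma> v = (\<lambda>y. (\<Sum>\<pi>\<in>Comms p. conf_out \<sigma> v \<pi> 0 y) / real (card (Comms p)))"

definition votes :: "nat \<Rightarrow> (nat \<Rightarrow> opt) \<Rightarrow> opt list" where
  "votes p \<sigma>v = map \<sigma>v [0..<n_agents p]"

definition root_out :: "nat \<Rightarrow> (nat \<Rightarrow> opt) \<Rightarrow> cstrat \<Rightarrow> lottery" where
  "root_out p \<sigma>v \<sigma>c = chance_out p \<sigma>c (votes p \<sigma>v)"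

text \<open>Subgame-perfect equilibrium: at every nonterminal history (the root, each chance node
  after a vote profile, each confirmation decision node) no agent has a unilateral
  deviation yielding a strictly SD-preferred outcome lottery.\<close>
definition is_SPE :: "nat \<Rightarrow> (nat \<Rightarrow> opt) \<Rightarrow> (nat \<Rightarrow> opt) \<Rightarrow> cstrat \<Rightarrow> bool" where
  "is_SPE p R \<sigma>v \<sigma>c \<longleftrightarrow>
     (\<forall>i < n_agents p. \<forall>x f.
        \<not> sd_strict R i (root_out p (\<sigma>v(i := x)) (\<sigma>c(i := f))) (root_out p \<sigma>v \<sigma>c)) \<and>
     (\<forall>v. length v = n_agents p \<longrightarrow> (\<forall>i < n_agents p. \<forall>f.
        \<not> sd_strict R i (chance_out p (\<sigma>c(i := f)) v) (chance_out p \<sigma>c v))) \<and>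
     (\<forall>v \<pi> t. length v = n_agents p \<and> \<pi> \<in> Comms p \<and> t < p + 1 \<longrightarrow> (\<forall>i < n_agents p. \<forall>f.
        \<not> sd_strict R i (conf_out (\<sigma>c(i := f)) v \<pi> t) (conf_out \<sigma>c v \<pi> t)))"

end

(* Every confirmation subgame ends either in pure w, w the Voting-stage winner, or in the
   lottery beta.  Backward induction along the committee shows that in a subgame-perfect
   equilibrium the confirmation outcome is that of sincere play (confirm iff you prefer w):
   pure w if some remaining committee member prefers w, beta otherwise.  A committee has p + 1
   of the 2p + 1 agents and at least p + 1 agents prefer Maj R, so a Voting-stage winner Maj R
   is always confirmed.  If the other option won, some agent voting for it prefers Maj R;
   switching her vote either makes Maj R win or raises the weight of Maj R in beta, and on a
   committee of Maj R supporters only the old winner is rejected, so the switch is strictly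
   profitable.  Sincere voting with sincere confirmations is an equilibrium. *)

theory Submission
  imports Defs
begin

definition confirmed :: "cstrat \<Rightarrow> opt list \<Rightarrow> nat list \<Rightarrow> nat \<Rightarrow> bool" where
  "confirmed \<sigma> v \<pi> t \<longleftrightarrow> (\<exists>s\<in>{t..<length \<pi>}. \<sigma> (\<pi> ! s) v \<pi> s)"

definition sincere :: "(nat \<Rightarrow> opt) \<Rightarrow> cstrat" where
  "sincere R = (\<lambda>i v \<pi> t. R i = winner v)"

lemma conf_aux_eq:
  "conf_aux \<sigma> v \<pi> t m =
     (if \<exists>s\<in>{t..<t + m}. \<sigma> (\<pi> ! s) v \<pi> s then pure (winner v) else beta v)"
proof (induction m arbitrary: t)
  case 0
  then show ?case by simp
next
  case (Suc m)
  have "{t..<t + Suc m} = insert t {Suc t..<Suc t + m}"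
    by auto
  then show ?case using Suc.IH[of "Suc t"] by auto
qed

lemma conf_out_eq:
  "conf_out \<sigma> v \<pi> t = (if confirmed \<sigma> v \<pi> t then pure (winner v) else beta v)"
  by (cases "t \<le> length \<pi>") (simp_all add: conf_out_def confirmed_def conf_aux_eq)

lemma confirmed_Suc:
  assumes "t < length \<pi>"
  shows "confirmed \<sigma> v \<pi> t \<longleftrightarrow> \<sigma> (\<pi> ! t) v \<pi> t \<or> confirmed \<sigma> v \<pi> (Suc t)"
proof -
  have "{t..<length \<pi>} = insert t {Suc t..<length \<pi>}"
    using assms by auto
  then show ?thesis
    unfolding confirmed_def by simp
qed

lemma confirmed_fun_upd:
  assumes "\<forall>s\<in>{t..<length \<pi>}. \<pi> ! s \<noteq> i"
  shows "confirmed (\<sigma>(i := f)) v \<pi> t \<longleftrightarrow> confirmed \<sigma> v \<pi> t"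
  unfolding confirmed_def using assms by (metis fun_upd_other)

lemma vcount_eq_length_filter: "vcount x v = length (filter (\<lambda>y. y = x) v)"
  unfolding vcount_def length_filter_conv_card ..

lemma vcount_OA_add_OB: "vcount OA v + vcount OB v = length v"
proof -
  have "filter (\<lambda>y. \<not> y = OA) v = filter (\<lambda>y. y = OB) v"
    by (metis opt.exhaust opt.distinct(1))
  then show ?thesis
    using sum_length_filter_compl[of "\<lambda>y. y = OA" v] by (simp add: vcount_eq_length_filter)
qed

lemma beta_OA_add_OB: "v \<noteq> [] \<Longrightarrow> beta v OA + beta v OB = 1"
  using vcount_OA_add_OB[of v] by (simp add: beta_def add_divide_distrib[symmetric])

lemma beta_nonneg: "0 \<le> beta v x"
  by (simp add: beta_def)

lemma vcount_le_length: "vcount x v \<le> length v"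
  unfolding vcount_eq_length_filter by (rule length_filter_le)

lemma beta_le_1: "beta v x \<le> 1"
  using vcount_le_length[of x v] by (simp add: beta_def divide_le_eq_1)

lemma pure_OA_add_OB: "pure w OA + pure w OB = 1"
  by (cases w) (simp_all add: pure_def)

lemma beta_eq_pureI:
  assumes "v \<noteq> []" and "beta v x = pure w x"
  shows "beta v = pure w"
proof
  fix y
  show "beta v y = pure w y"
    using assms beta_OA_add_OB[OF assms(1)] pure_OA_add_OB[of w] by (cases x; cases y) simp_all
qed

lemma conf_out_le_1: "conf_out \<sigma> v \<pi> t x \<le> 1"
  by (simp add: conf_out_eq beta_le_1 pure_def)

lemma best_of_pure_beta:
  assumes "v \<noteq> []" and "L = pure w \<or> L = beta v"
    and "pure w x \<le> L x" and "beta v x \<le> L x"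
  shows "L = (if x = w then pure w else beta v)"
proof (cases "x = w")
  case True
  then have "beta v x = pure w x" if "L = beta v"
    using that assms(3) beta_le_1[of v x] by (simp add: pure_def)
  then show ?thesis
    using True assms(2) beta_eq_pureI[OF assms(1)] by auto
next
  case False
  then have "beta v x = pure w x" if "L = pure w"
    using that assms(4) beta_nonneg[of v x] by (simp add: pure_def)
  then show ?thesis
    using False assms(2) beta_eq_pureI[OF assms(1)] by fastforce
qed

lemma conf_out_SPE_eq_sincere:
  assumes no_gain: "\<And>s f. s < length \<pi> \<Longrightarrow>
      \<not> sd_strict R (\<pi> ! s) (conf_out (\<sigma>(\<pi> ! s := f)) v \<pi> s) (conf_out \<sigma> v \<pi> s)"
    and "distinct \<pi>" and "v \<noteq> []" and "t \<le> length \<pi>"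
  shows "conf_out \<sigma> v \<pi> t = conf_out (sincere R) v \<pi> t"
  using assms(4)
proof (induction t rule: inc_induct)
  case base
  then show ?case by (simp add: conf_out_eq confirmed_def)
next
  case (step t)
  define i w where "i = \<pi> ! t" and "w = winner v"
  define cont where "cont = conf_out \<sigma> v \<pi> (Suc t)"
  have later: "\<forall>s\<in>{Suc t..<length \<pi>}. \<pi> ! s \<noteq> i"
    using \<open>distinct \<pi>\<close> step.hyps(2) by (auto simp: i_def nth_eq_iff_index_eq)
  have cur: "conf_out \<sigma> v \<pi> t = (if \<sigma> i v \<pi> t then pure w else cont)"
    using step.hyps(2) by (simp add: conf_out_eq confirmed_Suc i_def w_def cont_def)
  have sincere: "conf_out (sincere R) v \<pi> t =
      (if R i = w then pure w else conf_out (sincere R) v \<pi> (Suc t))"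
    using step.hyps(2) by (simp add: conf_out_eq confirmed_Suc i_def w_def sincere_def)
  \<comment> \<open>the constant strategies Y and N realize both alternatives of agent \<open>i\<close> at node \<open>t\<close>\<close>
  have confirm: "conf_out (\<sigma>(i := \<lambda>_ _ _. True)) v \<pi> t = pure w"
    using step.hyps(2) by (simp add: conf_out_eq confirmed_Suc i_def w_def)
  have reject: "conf_out (\<sigma>(i := \<lambda>_ _ _. False)) v \<pi> t = cont"
    using step.hyps(2) later by (simp add: conf_out_eq confirmed_Suc confirmed_fun_upd i_def cont_def)
  have "pure w (R i) \<le> conf_out \<sigma> v \<pi> t (R i)" "cont (R i) \<le> conf_out \<sigma> v \<pi> t (R i)"
    using no_gain[OF step.hyps(2), of "\<lambda>_ _ _. True"] no_gain[OF step.hyps(2), of "\<lambda>_ _ _. False"]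
      confirm reject by (simp_all add: sd_strict_def i_def not_less)
  moreover have "cont = pure w \<or> cont = beta v"
    by (simp add: cont_def conf_out_eq w_def)
  ultimately show ?case
    using best_of_pure_beta[OF \<open>v \<noteq> []\<close>, of "conf_out \<sigma> v \<pi> t" w "R i"] cur sincere step.IH
    unfolding cont_def by auto
qed

lemma sincere_conf_out_deviation_le:
  "conf_out ((sincere R)(i := f)) v \<pi> t (R i) \<le> conf_out (sincere R) v \<pi> t (R i)"
proof (cases "confirmed (sincere R) v \<pi> t")
  case True
  then obtain s where s: "s \<in> {t..<length \<pi>}" "R (\<pi> ! s) = winner v"
    by (auto simp: confirmed_def sincere_def)
  show ?thesis
  proof (cases "R i = winner v")
    case True
    then show ?thesis
      using \<open>confirmed (sincere R) v \<pi> t\<close> conf_out_le_1 by (simp add: conf_out_eq pure_def)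
  next
    case False
    then have "confirmed ((sincere R)(i := f)) v \<pi> t"
      using s by (auto simp: confirmed_def sincere_def)
    then show ?thesis
      using \<open>confirmed (sincere R) v \<pi> t\<close> by (simp add: conf_out_eq)
  qed
next
  case False
  show ?thesis
  proof (cases "R i = winner v")
    case True
    then have "\<forall>s\<in>{t..<length \<pi>}. \<pi> ! s \<noteq> i"
      using False by (auto simp: confirmed_def sincere_def)
    then show ?thesis
      by (simp add: conf_out_eq confirmed_fun_upd)
  next
    case False
    then show ?thesis
      using \<open>\<not> confirmed (sincere R) v \<pi> t\<close> beta_nonneg by (simp add: conf_out_eq pure_def)
  qed
qed

lemma finite_Comms: "finite (Comms p)"
proof (rule finite_subset)
  show "Comms p \<subseteq> {\<pi>. set \<pi> \<subseteq> {..<n_agents p} \<and> length \<pi> = p + 1}"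
    unfolding Comms_def by auto
qed (rule finite_lists_length_eq, simp)

lemma card_Comms_pos: "0 < card (Comms p)"
proof -
  have "[0..<p + 1] \<in> Comms p"
    unfolding Comms_def n_agents_def by auto
  then show ?thesis
    using finite_Comms card_gt_0_iff by blast
qed

lemma chance_out_cong:
  "(\<And>\<pi>. \<pi> \<in> Comms p \<Longrightarrow> conf_out \<sigma> v \<pi> 0 = conf_out \<sigma>' v' \<pi> 0) \<Longrightarrow>
     chance_out p \<sigma> v = chance_out p \<sigma>' v'"
  unfolding chance_out_def by simp

lemma chance_out_const:
  "(\<And>\<pi>. \<pi> \<in> Comms p \<Longrightarrow> conf_out \<sigma> v \<pi> 0 = L) \<Longrightarrow> chance_out p \<sigma> v = L"
  unfolding chance_out_def using card_Comms_pos[of p] by simp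

lemma chance_out_mono:
  "(\<And>\<pi>. \<pi> \<in> Comms p \<Longrightarrow> conf_out \<sigma> v \<pi> 0 x \<le> conf_out \<sigma>' v' \<pi> 0 x) \<Longrightarrow>
     chance_out p \<sigma> v x \<le> chance_out p \<sigma>' v' x"
  unfolding chance_out_def by (intro divide_right_mono sum_mono) auto

lemma chance_out_strict_mono:
  assumes "\<And>\<pi>. \<pi> \<in> Comms p \<Longrightarrow> conf_out \<sigma> v \<pi> 0 x \<le> conf_out \<sigma>' v' \<pi> 0 x"
    and "\<pi>\<^sub>0 \<in> Comms p" and "conf_out \<sigma> v \<pi>\<^sub>0 0 x < conf_out \<sigma>' v' \<pi>\<^sub>0 0 x"
  shows "chance_out p \<sigma> v x < chance_out p \<sigma>' v' x"
  unfolding chance_out_def using assms finite_Comms card_Comms_pos[of p]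
  by (intro divide_strict_right_mono sum_strict_mono_ex1) auto

lemma chance_out_le_1: "chance_out p \<sigma> v x \<le> 1"
proof -
  have "(\<Sum>\<pi>\<in>Comms p. conf_out \<sigma> v \<pi> 0 x) \<le> (\<Sum>\<pi>\<in>Comms p. 1)"
    by (intro sum_mono conf_out_le_1)
  then show ?thesis
    unfolding chance_out_def using card_Comms_pos[of p] by simp
qed

lemma length_votes: "length (votes p s) = n_agents p"
  by (simp add: votes_def)

lemma vcount_votes: "vcount x (votes p s) = card {j. j < n_agents p \<and> s j = x}"
  unfolding vcount_def votes_def by (intro arg_cong[where f = card]) auto

lemma winner_eq_iff_vcount:
  "length v = n_agents p \<Longrightarrow> winner v = x \<longleftrightarrow> p + 1 \<le> vcount x v"
  using vcount_OA_add_OB[of v] by (cases x) (auto simp: winner_def n_agents_def)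

lemma vcount_winner: "length v = n_agents p \<Longrightarrow> p + 1 \<le> vcount (winner v) v"
  using winner_eq_iff_vcount by blast

lemma Maj_eq_winner_votes: "Maj p R = winner (votes p R)"
  using winner_eq_iff_vcount[OF length_votes, of p R OA]
  by (cases "winner (votes p R)") (auto simp: Maj_def vcount_votes)

lemma card_Maj_supporters: "p + 1 \<le> card {j. j < n_agents p \<and> R j = Maj p R}"
  using vcount_winner[OF length_votes, of p R] by (simp add: Maj_eq_winner_votes vcount_votes)

lemma card_Int_nonempty:
  assumes "finite C" and "A \<subseteq> C" and "B \<subseteq> C" and "card C < card A + card B"
  shows "A \<inter> B \<noteq> {}"
proof
  assume "A \<inter> B = {}"
  then have "card (A \<union> B) = card A + card B"
    using assms(1-3) by (intro card_Un_disjoint) (auto intro: finite_subset)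
  moreover have "card (A \<union> B) \<le> card C"
    using assms(1-3) by (intro card_mono) auto
  ultimately show False
    using assms(4) by simp
qed

lemma Comms_meets:
  assumes "\<pi> \<in> Comms p" and "p + 1 \<le> card {j. j < n_agents p \<and> P j}"
  shows "\<exists>j\<in>set \<pi>. P j"
proof -
  have "card (set \<pi>) = p + 1" and "set \<pi> \<subseteq> {..<n_agents p}"
    using assms(1) by (auto simp: Comms_def distinct_card)
  then have "set \<pi> \<inter> {j. j < n_agents p \<and> P j} \<noteq> {}"
    using assms(2) by (intro card_Int_nonempty[of "{..<n_agents p}"]) (auto simp: n_agents_def)
  then show ?thesis
    by blast
qed

lemma Comms_within:
  assumes "p + 1 \<le> card {j. j < n_agents p \<and> P j}"
  shows "\<exists>\<pi>\<in>Comms p. \<forall>j\<in>set \<pi>. P j"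
proof -
  obtain S where "S \<subseteq> {j. j < n_agents p \<and> P j}" and "card S = p + 1"
    using obtain_subset_with_card_n[OF assms] by blast
  moreover have "finite S"
    using \<open>S \<subseteq> _\<close> by (rule finite_subset) simp
  ultimately have "sorted_list_of_set S \<in> Comms p" and "\<forall>j\<in>set (sorted_list_of_set S). P j"
    by (auto simp: Comms_def)
  then show ?thesis
    by blast
qed

lemma conf_out_sincere_Maj:
  assumes "\<pi> \<in> Comms p" and "winner v = Maj p R"
  shows "conf_out (sincere R) v \<pi> 0 = pure (Maj p R)"
proof -
  obtain j where "j \<in> set \<pi>" and "R j = winner v"
    using Comms_meets[OF assms(1) card_Maj_supporters] assms(2) by fastforce
  then have "confirmed (sincere R) v \<pi> 0"
    by (auto simp: confirmed_def sincere_def in_set_conv_nth)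
  then show ?thesis
    using assms(2) by (simp add: conf_out_eq)
qed

lemma chance_out_sincere_Maj:
  "winner v = Maj p R \<Longrightarrow> chance_out p (sincere R) v = pure (Maj p R)"
  by (rule chance_out_const) (rule conf_out_sincere_Maj)

lemma chance_out_SPE_eq_sincere:
  assumes "is_SPE p R \<sigma>v \<sigma>c" and "length v = n_agents p"
  shows "chance_out p \<sigma>c v = chance_out p (sincere R) v"
proof (rule chance_out_cong)
  fix \<pi>
  assume \<pi>: "\<pi> \<in> Comms p"
  then have "distinct \<pi>" and "length \<pi> = p + 1" and agents: "set \<pi> \<subseteq> {..<n_agents p}"
    by (auto simp: Comms_def)
  show "conf_out \<sigma>c v \<pi> 0 = conf_out (sincere R) v \<pi> 0"
  proof (rule conf_out_SPE_eq_sincere)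
    fix s f
    assume "s < length \<pi>"
    moreover from this have "\<pi> ! s < n_agents p"
      using agents nth_mem by blast
    ultimately show "\<not> sd_strict R (\<pi> ! s) (conf_out (\<sigma>c(\<pi> ! s := f)) v \<pi> s) (conf_out \<sigma>c v \<pi> s)"
      using assms \<pi> \<open>length \<pi> = p + 1\<close> unfolding is_SPE_def by auto
  qed (use \<open>distinct \<pi>\<close> assms(2) in \<open>auto simp: n_agents_def\<close>)
qed

lemma opt_eq_if_both_ne: "x \<noteq> z \<Longrightarrow> y \<noteq> z \<Longrightarrow> x = (y :: opt)"
  by (cases x; cases y; cases z) auto

lemma chance_out_sincere_vote_switch:
  assumes "winner (votes p s) \<noteq> Maj p R" and "s i \<noteq> Maj p R" and "i < n_agents p"
  defines "m \<equiv> Maj p R" and "v \<equiv> votes p s" and "v' \<equiv> votes p (s(i := Maj p R))"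
  shows "chance_out p (sincere R) v m < chance_out p (sincere R) v' m"
proof -
  have "{j. j < n_agents p \<and> s j = m} \<subset> {j. j < n_agents p \<and> (s(i := m)) j = m}"
    using assms(2,3) unfolding m_def by auto
  then have "vcount m v < vcount m v'"
    unfolding v_def v'_def m_def vcount_votes by (intro psubset_card_mono) auto
  then have beta_less: "beta v m < beta v' m"
    by (simp add: beta_def v_def v'_def length_votes n_agents_def divide_strict_right_mono)
  have "vcount m v \<le> p"
    using winner_eq_iff_vcount[OF length_votes] assms(1) unfolding v_def m_def by fastforce
  then have beta_less_1: "beta v m < 1"
    by (simp add: beta_def v_def length_votes n_agents_def)
  obtain \<pi>\<^sub>0 where \<pi>\<^sub>0: "\<pi>\<^sub>0 \<in> Comms p" "\<forall>j\<in>set \<pi>\<^sub>0. R j = m"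
    using Comms_within[OF card_Maj_supporters] unfolding m_def by blast
  then have "\<not> confirmed (sincere R) v \<pi>\<^sub>0 0"
    using assms(1) by (auto simp: confirmed_def sincere_def v_def m_def)
  then have at_\<pi>\<^sub>0: "conf_out (sincere R) v \<pi>\<^sub>0 0 = beta v"
    by (simp add: conf_out_eq)
  show ?thesis
  proof (cases "winner v' = m")
    case True
    then have "conf_out (sincere R) v' \<pi> 0 = pure m" if "\<pi> \<in> Comms p" for \<pi>
      using conf_out_sincere_Maj[OF that] unfolding m_def by blast
    then show ?thesis
      using \<pi>\<^sub>0(1) at_\<pi>\<^sub>0 beta_less_1 conf_out_le_1
      by (intro chance_out_strict_mono[of _ _ _ _ _ _ "\<pi>\<^sub>0"]) (auto simp: pure_def)
  next
    case False
    then have same_winner: "winner v' = winner v"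
      using assms(1) opt_eq_if_both_ne unfolding v_def m_def by blast
    then have same_confirmed: "confirmed (sincere R) v' \<pi> 0 = confirmed (sincere R) v \<pi> 0" for \<pi>
      by (simp add: confirmed_def sincere_def)
    show ?thesis
      using \<pi>\<^sub>0(1) at_\<pi>\<^sub>0 beta_less \<open>\<not> confirmed (sincere R) v \<pi>\<^sub>0 0\<close>
      by (intro chance_out_strict_mono[of _ _ _ _ _ _ "\<pi>\<^sub>0"])
        (auto simp: conf_out_eq same_winner same_confirmed)
  qed
qed

lemma SPE_winner_eq_Maj:
  assumes spe: "is_SPE p R \<sigma>v \<sigma>c"
  shows "winner (votes p \<sigma>v) = Maj p R"
proof (rule ccontr)
  define m w where "m = Maj p R" and "w = winner (votes p \<sigma>v)"
  assume "winner (votes p \<sigma>v) \<noteq> Maj p R"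
  then have "w \<noteq> m"
    by (simp add: m_def w_def)
  have "p + 1 \<le> card {j. j < n_agents p \<and> \<sigma>v j = w}"
    using vcount_winner[OF length_votes] by (simp add: w_def vcount_votes)
  moreover have "p + 1 \<le> card {j. j < n_agents p \<and> R j = m}"
    unfolding m_def by (rule card_Maj_supporters)
  ultimately have "{j. j < n_agents p \<and> \<sigma>v j = w} \<inter> {j. j < n_agents p \<and> R j = m} \<noteq> {}"
    by (intro card_Int_nonempty[of "{..<n_agents p}"]) (auto simp: n_agents_def)
  then obtain i where "i < n_agents p" and "\<sigma>v i = w" and "R i = m"
    by blast
  then have "chance_out p (sincere R) (votes p \<sigma>v) (R i) <
      chance_out p (sincere R) (votes p (\<sigma>v(i := m))) (R i)"
    using chance_out_sincere_vote_switch \<open>w \<noteq> m\<close> by (simp add: m_def w_def)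
  then have "sd_strict R i (root_out p (\<sigma>v(i := m)) (\<sigma>c(i := \<sigma>c i))) (root_out p \<sigma>v \<sigma>c)"
    using chance_out_SPE_eq_sincere[OF spe length_votes] by (simp add: sd_strict_def root_out_def)
  then show False
    using spe \<open>i < n_agents p\<close> unfolding is_SPE_def by blast
qed

lemma SPE_root_out_eq_Maj:
  "is_SPE p R \<sigma>v \<sigma>c \<Longrightarrow> root_out p \<sigma>v \<sigma>c = pure (Maj p R)"
  using chance_out_SPE_eq_sincere[OF _ length_votes] chance_out_sincere_Maj SPE_winner_eq_Maj
  by (simp add: root_out_def)

lemma root_out_sincere: "root_out p R (sincere R) = pure (Maj p R)"
  by (simp add: root_out_def Maj_eq_winner_votes chance_out_sincere_Maj)

lemma chance_out_sincere_deviation_le: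
  "chance_out p ((sincere R)(i := f)) v (R i) \<le> chance_out p (sincere R) v (R i)"
  by (intro chance_out_mono sincere_conf_out_deviation_le)

lemma root_out_sincere_deviation_le:
  "root_out p (R(i := x)) ((sincere R)(i := f)) (R i) \<le> root_out p R (sincere R) (R i)"
proof (cases "R i = Maj p R")
  case True
  then have "root_out p R (sincere R) (R i) = 1"
    by (simp add: root_out_sincere pure_def)
  moreover have "root_out p (R(i := x)) ((sincere R)(i := f)) (R i) \<le> 1"
    unfolding root_out_def by (rule chance_out_le_1)
  ultimately show ?thesis
    by simp
next
  case False
  define v' where "v' = votes p (R(i := x))"
  have "{j. j < n_agents p \<and> R j = Maj p R} \<subseteq> {j. j < n_agents p \<and> (R(i := x)) j = Maj p R}"
    using False by auto
  then have "card {j. j < n_agents p \<and> R j = Maj p R} \<le> vcount (Maj p R) v'"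
    unfolding v'_def vcount_votes by (intro card_mono) auto
  then have "winner v' = Maj p R"
    using card_Maj_supporters[of p R] winner_eq_iff_vcount[OF length_votes] unfolding v'_def
    by (meson le_trans)
  then have "root_out p (R(i := x)) ((sincere R)(i := f)) (R i) \<le> 0"
    using chance_out_sincere_deviation_le[of p R i f v'] False
    by (simp add: root_out_def v'_def[symmetric] chance_out_sincere_Maj pure_def)
  moreover have "root_out p R (sincere R) (R i) = 0"
    using False by (simp add: root_out_sincere pure_def)
  ultimately show ?thesis
    by simp
qed

lemma sincere_is_SPE: "is_SPE p R R (sincere R)"
  unfolding is_SPE_def sd_strict_def not_less
  using root_out_sincere_deviation_le chance_out_sincere_deviation_le sincere_conf_out_deviation_le
  by blast

theorem proposition2:
  fixes p :: nat and R :: "nat \<Rightarrow> opt"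
  shows "(\<forall>\<sigma>v \<sigma>c. is_SPE p R \<sigma>v \<sigma>c \<longrightarrow> root_out p \<sigma>v \<sigma>c = pure (Maj p R)) \<and>
         (\<exists>\<sigma>v \<sigma>c. is_SPE p R \<sigma>v \<sigma>c \<and> root_out p \<sigma>v \<sigma>c = pure (Maj p R))"
  using SPE_root_out_eq_Maj sincere_is_SPE root_out_sincere by blast

end
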